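(* For every integer $n\ge1$ and every $u\in V$, $\Pr(E_{3u})<\dfrac{36\,\zeta(3)}{\ln^{2}(n+1)}$, where $\zeta(3)=\sum_{i\ge1} i^{-3}$.
   Context: For an integer $n\ge1$, the $n$-octahedral graph $G'_n=(V,E')$ is the undirected graph with vertex set $V=\{u\in\mathbb{Z}^3:|u_1|+|u_2|+|u_3|=n\}$ and edge set $E'=\{\{v,w\}\subset V: v\neq w,\ |v_i-w_i|\le 1 \text{ for all } i=1,2,3\}$. For $u,v\in V$, $d_{uv}$ denotes the shortest-path distance in $G'_n$, and $Z_u=\left(\sum_{w\in V\setminus\{u\}} d_{uw}^{-2}\right)^{-1}$. The OSW random graph $G_n=(V,E)$ is the directed graph in which, for every $\{u,v\}\in E'$, both $(u,v),(v,u)\in E$, and in addition each vertex $u\in V$, independently of the others, chooses one vertex $v\in V\setminus\{u\}$ with probability $Z_u d_{uv}^{-2}$ and the long-range edge $(u,v)$ is added; $C_{uv}$ denotes the event that $u$ chooses $v$. For an ordered pair $(x,y)$ of distinct vertices, say $(x,y)$ is of type $s$ if $\{x,y\}\in E'$, and of type $w$ if $d_{xy}\ge2$ and $C_{xy}$ occurs. A C3 rooted at $u$ of type $(t_1,t_2,t_3)\in\{s,w\}^3$ is a triple $(u,a,b)$ of pairwise distinct vertices such that $(u,a)$ is of type $t_1$, $(a,b)$ is of type $t_2$ and $(b,u)$ is of type $t_3$. $E_{3u}$ is the event that there exists a C3 rooted at $u$ of type $(s,w,w)$. *)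

theory Defs
  imports "HOL-Probability.Probability"
begin

type_synonym vtx = "int \<times> int \<times> int"

definition octV :: "nat \<Rightarrow> vtx set" where
  "octV n = {(x,y,z). \<bar>x\<bar> + \<bar>y\<bar> + \<bar>z\<bar> = int n}"

definition octAdj :: "nat \<Rightarrow> vtx \<Rightarrow> vtx \<Rightarrow> bool" where
  "octAdj n v w \<longleftrightarrow> v \<in> octV n \<and> w \<in> octV n \<and> v \<noteq> w \<and>
     \<bar>fst v - fst w\<bar> \<le> 1 \<and> \<bar>fst (snd v) - fst (snd w)\<bar> \<le> 1 \<and>
     \<bar>snd (snd v) - snd (snd w)\<bar> \<le> 1"

definition octRel :: "nat \<Rightarrow> vtx rel" where
  "octRel n = {(v,w). octAdj n v w}"

definition octDist :: "nat \<Rightarrow> vtx \<Rightarrow> vtx \<Rightarrow> nat" where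
  "octDist n v w = (LEAST k. (v,w) \<in> (octRel n) ^^ k)"

definition octZ :: "nat \<Rightarrow> vtx \<Rightarrow> real" where
  "octZ n u = inverse (\<Sum>w\<in>octV n - {u}. inverse ((real (octDist n u w))\<^sup>2))"

definition choice_pmf :: "nat \<Rightarrow> vtx \<Rightarrow> vtx pmf" where
  "choice_pmf n u = embed_pmf (\<lambda>v. if v \<in> octV n - {u}
      then octZ n u * inverse ((real (octDist n u v))\<^sup>2) else 0)"

text \<open>Joint independent choices of all vertices: c u is the vertex chosen by u
  (so C_{uv} is the event c u = v).\<close>
definition osw_pmf :: "nat \<Rightarrow> (vtx \<Rightarrow> vtx) pmf" where
  "osw_pmf n = Pi_pmf (octV n) (0,0,0) (choice_pmf n)"

text \<open>Pair types: s = short-range edge of E'; w = long-range edge with d \<ge> 2 chosen.\<close>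
definition type_s :: "nat \<Rightarrow> vtx \<Rightarrow> vtx \<Rightarrow> bool" where
  "type_s n x y \<longleftrightarrow> octAdj n x y"

definition type_w :: "nat \<Rightarrow> (vtx \<Rightarrow> vtx) \<Rightarrow> vtx \<Rightarrow> vtx \<Rightarrow> bool" where
  "type_w n c x y \<longleftrightarrow> x \<noteq> y \<and> octDist n x y \<ge> 2 \<and> c x = y"

definition E3 :: "nat \<Rightarrow> vtx \<Rightarrow> (vtx \<Rightarrow> vtx) set" where
  "E3 n u = {c. \<exists>a b. a \<in> octV n \<and> b \<in> octV n \<and> u \<noteq> a \<and> u \<noteq> b \<and> a \<noteq> b \<and>
       type_s n u a \<and> type_w n c a b \<and> type_w n c b u}"

definition zeta3 :: real where
  "zeta3 = (\<Sum>i. 1 / (real (Suc i))^3)"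

end

theory Submission
  imports Defs "HOL-Analysis.Harmonic_Numbers"
begin

text \<open>
  Every vertex \<open>v\<close> has a coordinate \<open>z\<close> with \<open>3\<bar>z\<bar> \<ge> n\<close>, and for each \<open>s \<le> \<bar>z\<bar>\<close> the
  \<open>4s\<close> vertices on the same hemisphere whose projection lies at \<open>\<ell>\<^sub>1\<close>-distance \<open>s\<close> from that
  of \<open>v\<close> are within graph distance \<open>s\<close>. Hence \<open>Z\<^sub>v\<^sup>-\<^sup>1 \<ge> 4 H\<^bsub>\<bar>z\<bar>\<^esub> \<ge> 4 (ln (n + 1) - ln 3)\<close>.

  A C3 of type \<open>(s, w, w)\<close> at \<open>u\<close> needs one of the at most 27 neighbours \<open>a\<close> of \<open>u\<close> and
  a vertex \<open>b\<close> such that \<open>a\<close> chooses \<open>b\<close> and \<open>b\<close> chooses \<open>u\<close>, which by independence has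
  probability \<open>Z\<^sub>a Z\<^sub>b d\<^sub>a\<^sub>b\<^sup>-\<^sup>2 d\<^sub>b\<^sub>u\<^sup>-\<^sup>2\<close>. Each coordinate offset \<open>k\<close> of \<open>b - a\<close> is at most
  \<open>d\<^sub>a\<^sub>b\<close> and at most \<open>d\<^sub>b\<^sub>u + 1\<close>, so \<open>1/(d\<^sub>a\<^sub>b d\<^sub>b\<^sub>u)\<close> is bounded by a weight of \<open>k\<close> of total
  mass \<open>9/4\<close>; using two coordinates, and that at most two vertices share a projection,
  the sum over \<open>b\<close> is at most \<open>2 (9/4)\<^sup>2\<close>. This gives
  \<open>Pr(E\<^sub>3\<^sub>u) \<le> 27 \<cdot> (81/8) / (16 (ln (n + 1) - ln 3)\<^sup>2)\<close>, which is below \<open>36 / ln\<^sup>2 (n + 1)\<close>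
  once \<open>ln (n + 1) \<ge> 6\<close>; for smaller \<open>n\<close> the claimed bound exceeds \<open>1\<close> since \<open>\<zeta>(3) \<ge> 1\<close>.
\<close>


section \<open>Walks in the octahedral graph\<close>

lemma finite_octV: "finite (octV n)"
proof (rule finite_subset)
  show "octV n \<subseteq> {- int n..int n} \<times> {- int n..int n} \<times> {- int n..int n}"
    by (auto simp: octV_def)
qed auto

lemma relpow_sym:
  assumes "\<And>x y. (x, y) \<in> R \<Longrightarrow> (y, x) \<in> R"
  shows "(x, y) \<in> R ^^ k \<Longrightarrow> (y, x) \<in> R ^^ k"
proof (induction k arbitrary: y)
  case (Suc k)
  then obtain m where "(x, m) \<in> R ^^ k" "(m, y) \<in> R" by auto
  with Suc.IH assms show ?case by (blast intro: relpow_Suc_I2)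
qed simp

lemma relpow_map:
  assumes "\<And>x y. (x, y) \<in> R \<Longrightarrow> (f x, f y) \<in> S"
  shows "(a, b) \<in> R ^^ k \<Longrightarrow> (f a, f b) \<in> S ^^ k"
proof (induction k arbitrary: b)
  case (Suc k)
  then obtain m where "(a, m) \<in> R ^^ k" "(m, b) \<in> R" by auto
  with Suc.IH assms show ?case by (blast intro: relpow_Suc_I)
qed simp

lemma relpow_lipschitz:
  fixes f :: "'a \<Rightarrow> int"
  assumes "\<And>x y. (x, y) \<in> R \<Longrightarrow> \<bar>f x - f y\<bar> \<le> 1"
  shows "(x, y) \<in> R ^^ k \<Longrightarrow> \<bar>f x - f y\<bar> \<le> int k"
proof (induction k arbitrary: y)
  case (Suc k)
  then obtain m where "(x, m) \<in> R ^^ k" "(m, y) \<in> R" by auto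
  with Suc.IH[of m] assms[of m y] show ?case by linarith
qed simp

lemma octRel_sym: "(v, w) \<in> octRel n \<Longrightarrow> (w, v) \<in> octRel n"
  by (auto simp: octRel_def octAdj_def abs_minus_commute)

text \<open>Lift of a point \<open>(x, y)\<close> of the diamond \<open>\<bar>x\<bar> + \<bar>y\<bar> \<le> n\<close> to the upper (\<open>s = 1\<close>) or
  lower (\<open>s = -1\<close>) hemisphere of the octahedron.\<close>
definition hemi_lift :: "nat \<Rightarrow> int \<Rightarrow> int \<Rightarrow> int \<Rightarrow> vtx" where
  "hemi_lift n s x y = (x, y, s * (int n - \<bar>x\<bar> - \<bar>y\<bar>))"

lemma hemi_lift_in_octV:
  "\<bar>s\<bar> = 1 \<Longrightarrow> \<bar>x\<bar> + \<bar>y\<bar> \<le> int n \<Longrightarrow> hemi_lift n s x y \<in> octV n"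
  by (simp add: hemi_lift_def octV_def abs_mult)

lemma octV_eq_hemi_lift:
  assumes "(x, y, z) \<in> octV n"
  shows "(x, y, z) = hemi_lift n (if 0 \<le> z then 1 else -1) x y"
  using assms by (auto simp: hemi_lift_def octV_def)

lemma hemi_lift_adj:
  assumes "\<bar>s\<bar> = 1" "\<bar>x\<bar> + \<bar>y\<bar> \<le> int n" "\<bar>x'\<bar> + \<bar>y'\<bar> \<le> int n"
    and "\<bar>x - x'\<bar> + \<bar>y - y'\<bar> = 1"
  shows "(hemi_lift n s x y, hemi_lift n s x' y') \<in> octRel n"
proof -
  have "\<bar>x - x'\<bar> \<le> 1" "\<bar>y - y'\<bar> \<le> 1"
    and "\<bar>s * (int n - \<bar>x\<bar> - \<bar>y\<bar>) - s * (int n - \<bar>x'\<bar> - \<bar>y'\<bar>)\<bar> \<le> 1"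
    using assms(1,4) by (simp_all add: right_diff_distrib[symmetric] abs_mult) linarith+
  with assms show ?thesis
    unfolding octRel_def octAdj_def using hemi_lift_in_octV by (auto simp: hemi_lift_def)
qed

lemma int_step_toward:
  fixes a b :: int
  assumes "a \<noteq> b"
  defines "c \<equiv> b - sgn (b - a)"
  shows "\<bar>b - c\<bar> = 1" "\<bar>c - a\<bar> = \<bar>b - a\<bar> - 1" "max (\<bar>a\<bar>) (\<bar>c\<bar>) \<le> max (\<bar>a\<bar>) (\<bar>b\<bar>)"
proof -
  consider "a < b" "c = b - 1" | "b < a" "c = b + 1"
    using assms by (cases "a < b") (auto simp: c_def)
  then show "\<bar>b - c\<bar> = 1" "\<bar>c - a\<bar> = \<bar>b - a\<bar> - 1" "max (\<bar>a\<bar>) (\<bar>c\<bar>) \<le> max (\<bar>a\<bar>) (\<bar>b\<bar>)"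
    by (cases; linarith)+
qed

lemma hemi_lift_walk:
  assumes "\<bar>s\<bar> = 1"
  shows "max (\<bar>x\<bar>) (\<bar>x'\<bar>) + max (\<bar>y\<bar>) (\<bar>y'\<bar>) \<le> int n \<Longrightarrow>
    (hemi_lift n s x y, hemi_lift n s x' y') \<in> octRel n ^^ nat (\<bar>x' - x\<bar> + \<bar>y' - y\<bar>)"
proof (induction "nat (\<bar>x' - x\<bar> + \<bar>y' - y\<bar>)" arbitrary: x' y')
  case 0
  then have "x' = x" "y' = y" by arith+
  then show ?case by simp
next
  case (Suc k)
  txt \<open>Undo the last unit step, taken in the first coordinate that still differs.\<close>
  define x0 where "x0 = (if x' = x then x' else x' - sgn (x' - x))"
  define y0 where "y0 = (if x' = x then y' - sgn (y' - y) else y')"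
  have "\<bar>x' - x0\<bar> + \<bar>y' - y0\<bar> = 1 \<and>
      \<bar>x0 - x\<bar> + \<bar>y0 - y\<bar> = \<bar>x' - x\<bar> + \<bar>y' - y\<bar> - 1 \<and>
      max (\<bar>x\<bar>) (\<bar>x0\<bar>) \<le> max (\<bar>x\<bar>) (\<bar>x'\<bar>) \<and> max (\<bar>y\<bar>) (\<bar>y0\<bar>) \<le> max (\<bar>y\<bar>) (\<bar>y'\<bar>)"
  proof (cases "x' = x")
    case True
    with Suc.hyps(2) have "y \<noteq> y'" by auto
    with True int_step_toward[of y y'] show ?thesis by (simp add: x0_def y0_def)
  next
    case False
    with int_step_toward[of x x'] show ?thesis by (simp add: x0_def y0_def)
  qed
  then have step: "\<bar>x' - x0\<bar> + \<bar>y' - y0\<bar> = 1"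
    and shorter: "\<bar>x0 - x\<bar> + \<bar>y0 - y\<bar> = \<bar>x' - x\<bar> + \<bar>y' - y\<bar> - 1"
    and inside: "max (\<bar>x\<bar>) (\<bar>x0\<bar>) + max (\<bar>y\<bar>) (\<bar>y0\<bar>) \<le> max (\<bar>x\<bar>) (\<bar>x'\<bar>) + max (\<bar>y\<bar>) (\<bar>y'\<bar>)"
    by (simp_all add: add_mono)
  have len: "k = nat (\<bar>x0 - x\<bar> + \<bar>y0 - y\<bar>)"
    using Suc.hyps(2) shorter by linarith
  have bound: "max (\<bar>x\<bar>) (\<bar>x0\<bar>) + max (\<bar>y\<bar>) (\<bar>y0\<bar>) \<le> int n"
    using Suc.prems inside by linarith
  have "(hemi_lift n s x y, hemi_lift n s x0 y0) \<in> octRel n ^^ k"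
    using Suc.hyps(1)[OF len bound] len by simp
  moreover have "(hemi_lift n s x0 y0, hemi_lift n s x' y') \<in> octRel n"
  proof (rule hemi_lift_adj[OF assms])
    show "\<bar>x0\<bar> + \<bar>y0\<bar> \<le> int n" "\<bar>x'\<bar> + \<bar>y'\<bar> \<le> int n"
      using bound Suc.prems by (meson add_mono max.cobounded2 order_trans)+
    show "\<bar>x0 - x'\<bar> + \<bar>y0 - y'\<bar> = 1" using step by (simp add: abs_minus_commute)
  qed
  ultimately show ?case
    using Suc.hyps(2) by (metis relpow_Suc_I)
qed

text \<open>The vertex \<open>(n, 0, 0)\<close> lies on both hemispheres.\<close>
lemma octV_walk_to_pole:
  assumes "v \<in> octV n"
  shows "\<exists>k. (v, (int n, 0, 0)) \<in> octRel n ^^ k"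
proof -
  obtain x y z where v: "v = (x, y, z)" by (cases v)
  define s :: int where "s = (if 0 \<le> z then 1 else -1)"
  have s: "\<bar>s\<bar> = 1" by (simp add: s_def)
  have xy: "\<bar>x\<bar> + \<bar>y\<bar> \<le> int n" using assms v by (auto simp: octV_def)
  have "(v, hemi_lift n s 0 0) \<in> octRel n ^^ nat (\<bar>0 - x\<bar> + \<bar>0 - y\<bar>)"
    using hemi_lift_walk[OF s, of x 0 y 0 n] octV_eq_hemi_lift assms xy v s_def by simp
  moreover have "(hemi_lift n s 0 0, hemi_lift n s (int n) 0) \<in> octRel n ^^ nat (\<bar>int n - 0\<bar> + \<bar>0 - 0\<bar>)"
    using hemi_lift_walk[OF s, of 0 "int n" 0 0 n] by simp
  moreover have "hemi_lift n s (int n) 0 = (int n, 0, 0)" by (simp add: hemi_lift_def)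
  ultimately show ?thesis by (metis relpow_trans)
qed

lemma octV_connected:
  assumes "v \<in> octV n" "w \<in> octV n"
  shows "\<exists>k. (v, w) \<in> octRel n ^^ k"
  using octV_walk_to_pole[OF assms(1)] octV_walk_to_pole[OF assms(2)]
    relpow_sym[OF octRel_sym] relpow_trans by metis

lemma octDist_walk: "v \<in> octV n \<Longrightarrow> w \<in> octV n \<Longrightarrow> (v, w) \<in> octRel n ^^ octDist n v w"
  unfolding octDist_def using octV_connected by (rule LeastI_ex)

lemma octDist_le: "(v, w) \<in> octRel n ^^ k \<Longrightarrow> octDist n v w \<le> k"
  unfolding octDist_def by (rule Least_le)

lemma octDist_pos: "v \<in> octV n \<Longrightarrow> w \<in> octV n \<Longrightarrow> v \<noteq> w \<Longrightarrow> 1 \<le> octDist n v w"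
  using octDist_walk[of v n w] by (cases "octDist n v w") auto

lemma octDist_ge_coord:
  assumes "v \<in> octV n" "w \<in> octV n"
  shows "\<bar>fst v - fst w\<bar> \<le> int (octDist n v w)"
    and "\<bar>fst (snd v) - fst (snd w)\<bar> \<le> int (octDist n v w)"
  by (auto intro!: relpow_lipschitz[OF _ octDist_walk[OF assms]] simp: octRel_def octAdj_def)

text \<open>A graph automorphism permuting the coordinates cyclically; it transfers bounds proved
  for the last coordinate of a vertex to the other two.\<close>
definition rot :: "vtx \<Rightarrow> vtx" where
  "rot v = (fst (snd v), snd (snd v), fst v)"

lemma rot_rot_rot [simp]: "rot (rot (rot v)) = v"
  by (simp add: rot_def)

lemma rot_in_octV_iff [simp]: "rot v \<in> octV n \<longleftrightarrow> v \<in> octV n"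
  by (cases v) (auto simp: rot_def octV_def)

lemma bij_betw_rot: "bij_betw rot (octV n - {v}) (octV n - {rot v})"
  by (rule bij_betw_byWitness[where f' = "rot \<circ> rot"]) (auto, metis rot_rot_rot rot_in_octV_iff)

lemma octDist_rot: "octDist n (rot v) (rot w) = octDist n v w"
proof -
  have rel: "(x, y) \<in> octRel n \<Longrightarrow> (rot x, rot y) \<in> octRel n" for x y
    by (cases x; cases y) (auto simp: rot_def octRel_def octAdj_def octV_def)
  have walk: "(a, b) \<in> octRel n ^^ k \<Longrightarrow> (rot a, rot b) \<in> octRel n ^^ k" for a b k
    using relpow_map[of "octRel n" rot "octRel n"] rel by blast
  have "(rot v, rot w) \<in> octRel n ^^ k \<longleftrightarrow> (v, w) \<in> octRel n ^^ k" for k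
    using walk[of v w k] walk[OF walk, of "rot v" "rot w" k] by auto
  then show ?thesis by (simp add: octDist_def)
qed

section \<open>The normalising constant\<close>

definition inv_sq_dist_sum :: "nat \<Rightarrow> vtx \<Rightarrow> real" where
  "inv_sq_dist_sum n u = (\<Sum>w\<in>octV n - {u}. inverse ((real (octDist n u w))\<^sup>2))"

lemma octZ_eq: "octZ n u = inverse (inv_sq_dist_sum n u)"
  by (simp add: octZ_def inv_sq_dist_sum_def)

lemma inv_sq_dist_sum_rot: "inv_sq_dist_sum n (rot v) = inv_sq_dist_sum n v"
  unfolding inv_sq_dist_sum_def
  using sum.reindex_bij_betw[OF bij_betw_rot, of "\<lambda>w. inverse ((real (octDist n (rot v) w))\<^sup>2)"]
  by (simp add: octDist_rot)

text \<open>The points of the circle \<open>\<bar>p\<bar> + \<bar>q\<bar> = s\<close> in \<open>\<int>\<^sup>2\<close>, as \<open>s\<close> points on each of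
  the four sides \<open>r < 4\<close>.\<close>
definition diamond_point :: "nat \<times> nat \<times> nat \<Rightarrow> int \<times> int" where
  "diamond_point = (\<lambda>(s, r, a). let s = int s; a = int a in
     if r = 0 then (a, s - a) else if r = 1 then (s - a, - a)
     else if r = 2 then (- a, a - s) else (a - s, a))"

lemma diamond_point_norm:
  "a < s \<Longrightarrow> \<bar>fst (diamond_point (s, r, a))\<bar> + \<bar>snd (diamond_point (s, r, a))\<bar> = int s"
  by (auto simp: diamond_point_def Let_def)

lemma inj_on_diamond_point: "inj_on diamond_point (SIGMA s:UNIV. {..<4} \<times> {..<s})"
proof (rule inj_onI, clarsimp)
  fix s r a s' r' a' :: nat
  assume "r < 4" "a < s" "r' < 4" "a' < s'"
    and "diamond_point (s, r, a) = diamond_point (s', r', a')"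
  then show "s = s' \<and> r = r' \<and> a = a'"
    by (auto simp: diamond_point_def Let_def split: if_splits)
qed

lemma hemi_lift_shift:
  assumes "\<bar>\<sigma>\<bar> = 1" "\<bar>x\<bar> + \<bar>y\<bar> + (\<bar>p\<bar> + \<bar>q\<bar>) \<le> int n"
  shows "hemi_lift n \<sigma> (x + p) (y + q) \<in> octV n"
    and "octDist n (hemi_lift n \<sigma> x y) (hemi_lift n \<sigma> (x + p) (y + q)) \<le> nat (\<bar>p\<bar> + \<bar>q\<bar>)"
proof -
  have "max (\<bar>x\<bar>) (\<bar>x + p\<bar>) + max (\<bar>y\<bar>) (\<bar>y + q\<bar>) \<le> (\<bar>x\<bar> + \<bar>p\<bar>) + (\<bar>y\<bar> + \<bar>q\<bar>)"
    by (intro add_mono max.boundedI abs_triangle_ineq) simp_all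
  also have "\<dots> \<le> int n" using assms(2) by (simp add: ac_simps)
  finally have walk: "max (\<bar>x\<bar>) (\<bar>x + p\<bar>) + max (\<bar>y\<bar>) (\<bar>y + q\<bar>) \<le> int n" .
  from hemi_lift_walk[OF assms(1) this]
  show "octDist n (hemi_lift n \<sigma> x y) (hemi_lift n \<sigma> (x + p) (y + q)) \<le> nat (\<bar>p\<bar> + \<bar>q\<bar>)"
    by (auto dest: octDist_le)
  have "\<bar>x + p\<bar> + \<bar>y + q\<bar> \<le> int n"
    using walk by (meson add_mono max.cobounded2 order_trans)
  with assms(1) show "hemi_lift n \<sigma> (x + p) (y + q) \<in> octV n"
    by (rule hemi_lift_in_octV)
qed

text \<open>The \<open>4s\<close> vertices over the circle of radius \<open>s \<le> \<bar>z\<bar>\<close> around \<open>(x, y)\<close> lie on the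
  hemisphere of \<open>v\<close> and within distance \<open>s\<close> of it.\<close>
lemma harm_le_inv_sq_dist_sum:
  assumes v: "(x, y, z) \<in> octV n"
  shows "4 * harm (nat \<bar>z\<bar>) \<le> inv_sq_dist_sum n (x, y, z)"
proof -
  define \<sigma> :: int where "\<sigma> = (if 0 \<le> z then 1 else -1)"
  define D where "D = (SIGMA s:{1..nat \<bar>z\<bar>}. {..<4::nat} \<times> {..<s})"
  define g where "g t = hemi_lift n \<sigma> (x + fst (diamond_point t)) (y + snd (diamond_point t))" for t
  define f where "f = (\<lambda>w. inverse ((real (octDist n (x, y, z) w))\<^sup>2))"
  have \<sigma>: "\<bar>\<sigma>\<bar> = 1" and v_eq: "(x, y, z) = hemi_lift n \<sigma> x y"
    using octV_eq_hemi_lift[OF v] by (auto simp: \<sigma>_def)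
  have xyz: "\<bar>x\<bar> + \<bar>y\<bar> + \<bar>z\<bar> = int n" using v by (simp add: octV_def)
  have g_good: "g t \<in> octV n - {(x, y, z)} \<and> inverse ((real (fst t))\<^sup>2) \<le> f (g t)" if "t \<in> D" for t
  proof -
    obtain s r a where t: "t = (s, r, a)" and s: "1 \<le> s" "s \<le> nat \<bar>z\<bar>" and "a < s"
      using \<open>t \<in> D\<close> by (auto simp: D_def)
    then have norm: "\<bar>fst (diamond_point t)\<bar> + \<bar>snd (diamond_point t)\<bar> = int s"
      using diamond_point_norm by simp
    with s(2) xyz have "\<bar>x\<bar> + \<bar>y\<bar> + (\<bar>fst (diamond_point t)\<bar> + \<bar>snd (diamond_point t)\<bar>) \<le> int n"
      by simp
    from hemi_lift_shift[OF \<sigma> this] norm v_eq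
    have in_V: "g t \<in> octV n" and dist: "octDist n (x, y, z) (g t) \<le> s"
      by (simp_all add: g_def)
    have "g t \<noteq> (x, y, z)"
      using norm s by (auto simp: g_def hemi_lift_def)
    then have "1 \<le> octDist n (x, y, z) (g t)"
      using octDist_pos[OF v in_V] by simp
    with dist have "inverse ((real s)\<^sup>2) \<le> f (g t)"
      unfolding f_def by (intro le_imp_inverse_le power_mono) auto
    with in_V \<open>g t \<noteq> (x, y, z)\<close> show ?thesis by (simp add: t)
  qed
  have "inj_on g D"
  proof (rule inj_onI)
    fix t t' assume "t \<in> D" "t' \<in> D" "g t = g t'"
    then have "diamond_point t = diamond_point t'"
      by (simp add: g_def hemi_lift_def prod_eq_iff)
    with \<open>t \<in> D\<close> \<open>t' \<in> D\<close> show "t = t'"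
      using inj_on_diamond_point by (auto simp: D_def inj_on_def)
  qed
  have "4 * harm (nat \<bar>z\<bar>) = (\<Sum>s\<in>{1..nat \<bar>z\<bar>}. 4 * inverse (real s))"
    by (simp add: harm_def sum_distrib_left)
  also have "\<dots> = (\<Sum>s\<in>{1..nat \<bar>z\<bar>}. \<Sum>t\<in>{..<4::nat} \<times> {..<s}. inverse ((real s)\<^sup>2))"
    by (intro sum.cong refl) (simp add: card_cartesian_product power2_eq_square)
  also have "\<dots> = (\<Sum>t\<in>D. inverse ((real (fst t))\<^sup>2))"
    unfolding D_def by (subst sum.Sigma) (auto simp: case_prod_beta)
  also have "\<dots> \<le> (\<Sum>t\<in>D. f (g t))"
    by (rule sum_mono) (use g_good in blast)
  also have "\<dots> = (\<Sum>w\<in>g ` D. f w)"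
    by (simp only: sum.reindex[OF \<open>inj_on g D\<close>] comp_def)
  also have "\<dots> \<le> (\<Sum>w\<in>octV n - {(x, y, z)}. f w)"
  proof (rule sum_mono2)
    show "finite (octV n - {(x, y, z)})" using finite_octV by simp
    show "g ` D \<subseteq> octV n - {(x, y, z)}"
    proof (rule image_subsetI)
      show "g t \<in> octV n - {(x, y, z)}" if "t \<in> D" for t
        using g_good[OF that] by (rule conjunct1)
    qed
    show "0 \<le> f w" for w by (simp add: f_def)
  qed
  finally show ?thesis
    by (simp only: inv_sq_dist_sum_def f_def)
qed

lemma ln_le_inv_sq_dist_sum:
  assumes v: "v \<in> octV n"
  shows "4 * (ln (real n + 1) - ln 3) \<le> inv_sq_dist_sum n v"
proof -
  obtain x y z where xyz: "v = (x, y, z)" by (cases v)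
  have coord: "4 * harm (nat \<bar>c\<bar>) \<le> inv_sq_dist_sum n v" if "c \<in> {x, y, z}" for c
  proof -
    have "rot v = (y, z, x)" "rot (rot v) = (z, x, y)" by (simp_all add: xyz rot_def)
    moreover have "inv_sq_dist_sum n (rot (rot v)) = inv_sq_dist_sum n v"
      by (simp add: inv_sq_dist_sum_rot)
    ultimately show ?thesis
      using that v xyz harm_le_inv_sq_dist_sum[of x y z n] inv_sq_dist_sum_rot[of n v]
        harm_le_inv_sq_dist_sum[of y z x n] harm_le_inv_sq_dist_sum[of z x y n]
        rot_in_octV_iff[of v n] rot_in_octV_iff[of "rot v" n]
      by auto
  qed
  have "\<exists>c\<in>{x, y, z}. \<bar>x\<bar> \<le> \<bar>c\<bar> \<and> \<bar>y\<bar> \<le> \<bar>c\<bar> \<and> \<bar>z\<bar> \<le> \<bar>c\<bar>"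
    by (cases "\<bar>x\<bar> \<le> \<bar>y\<bar>"; cases "\<bar>y\<bar> \<le> \<bar>z\<bar>"; cases "\<bar>x\<bar> \<le> \<bar>z\<bar>") auto
  then obtain c where c: "c \<in> {x, y, z}" and "\<bar>x\<bar> \<le> \<bar>c\<bar>" "\<bar>y\<bar> \<le> \<bar>c\<bar>" "\<bar>z\<bar> \<le> \<bar>c\<bar>"
    by blast
  moreover have "\<bar>x\<bar> + \<bar>y\<bar> + \<bar>z\<bar> = int n" using v xyz by (simp add: octV_def)
  ultimately have "int n \<le> 3 * \<bar>c\<bar>" by linarith
  have "ln (real n + 1) - ln 3 = ln ((real n + 1) / 3)" by (simp add: ln_div)
  also have "\<dots> \<le> ln (real (nat \<bar>c\<bar>) + 1)"
  proof (rule ln_mono)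
    have "real n \<le> 3 * real (nat \<bar>c\<bar>)"
      using \<open>int n \<le> 3 * \<bar>c\<bar>\<close> by (simp add: of_nat_nat flip: of_int_le_iff)
    then show "(real n + 1) / 3 \<le> real (nat \<bar>c\<bar>) + 1" by simp
  qed simp_all
  also have "\<dots> \<le> harm (nat \<bar>c\<bar>)" by (rule ln_le_harm)
  finally have "4 * (ln (real n + 1) - ln 3) \<le> 4 * harm (nat \<bar>c\<bar>)" by simp
  then show ?thesis using coord[OF c] by (rule order_trans)
qed

section \<open>The long-range contacts\<close>

lemma pmf_choice_pmf:
  assumes "0 < inv_sq_dist_sum n u"
  shows "pmf (choice_pmf n u) v =
    (if v \<in> octV n - {u} then octZ n u * inverse ((real (octDist n u v))\<^sup>2) else 0)"
proof -
  define f where "f v = (if v \<in> octV n - {u} then octZ n u * inverse ((real (octDist n u v))\<^sup>2) else 0)" for v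
  have f_nonneg: "0 \<le> f v" for v
    using assms by (simp add: f_def octZ_eq)
  have "(\<integral>\<^sup>+v. ennreal (f v) \<partial>count_space UNIV) = (\<Sum>v\<in>octV n - {u}. ennreal (f v))"
    by (rule nn_integral_count_space') (auto simp: f_def finite_octV)
  also have "\<dots> = ennreal (\<Sum>v\<in>octV n - {u}. f v)"
    using f_nonneg by (rule sum_ennreal)
  also have "(\<Sum>v\<in>octV n - {u}. f v) = octZ n u * inv_sq_dist_sum n u"
    by (simp add: f_def inv_sq_dist_sum_def sum_distrib_left)
  also have "\<dots> = 1" using assms by (simp add: octZ_eq)
  finally have "(\<integral>\<^sup>+v. ennreal (f v) \<partial>count_space UNIV) = 1" by simp
  from pmf_embed_pmf[OF f_nonneg this] show ?thesis
    by (simp add: choice_pmf_def f_def[abs_def])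
qed

lemma measure_Pi_pmf_two_components:
  assumes "finite A" "a \<in> A" "b \<in> A" "a \<noteq> b"
  shows "measure_pmf.prob (Pi_pmf A dflt p) {f. f a = x \<and> f b = y} = pmf (p a) x * pmf (p b) y"
proof -
  define B where "B c = (if c = a then {x} else if c = b then {y} else UNIV)" for c
  have "{f. f a = x \<and> f b = y} = Pi A B"
    using assms(2-4) by (auto simp: B_def Pi_def)
  then have "measure_pmf.prob (Pi_pmf A dflt p) {f. f a = x \<and> f b = y} =
      (\<Prod>c\<in>A. measure_pmf.prob (p c) (B c))"
    using measure_Pi_pmf_Pi[OF assms(1)] by simp
  also have "\<dots> = (\<Prod>c\<in>{a, b}. measure_pmf.prob (p c) (B c))"
    using assms by (intro prod.mono_neutral_right) (auto simp: B_def)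
  also have "\<dots> = pmf (p a) x * pmf (p b) y"
    using assms(4) by (simp add: B_def measure_pmf_single)
  finally show ?thesis .
qed

section \<open>Coordinate weights\<close>

lemma sum_octV_le_projection:
  fixes F :: "int \<Rightarrow> int \<Rightarrow> real"
  assumes "\<And>x y. 0 \<le> F x y"
  shows "(\<Sum>v\<in>octV n. F (fst v) (fst (snd v))) \<le> 2 * (\<Sum>x = - int n..int n. \<Sum>y = - int n..int n. F x y)"
proof -
  define D where "D = {-1, 1::int} \<times> {- int n..int n} \<times> {- int n..int n}"
  define h where "h = (\<lambda>(s, x, y). hemi_lift n s x y)"
  have "octV n \<subseteq> h ` D"
  proof
    fix v assume "v \<in> octV n"
    moreover obtain x y z where v: "v = (x, y, z)" by (cases v)
    ultimately have "v = h (if 0 \<le> z then 1 else -1, x, y)" "\<bar>x\<bar> + \<bar>y\<bar> + \<bar>z\<bar> = int n"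
      using octV_eq_hemi_lift by (auto simp: h_def octV_def)
    moreover from this(2) have "(if 0 \<le> z then 1 else -1, x, y) \<in> D"
      by (auto simp: D_def)
    ultimately show "v \<in> h ` D" by blast
  qed
  then have "(\<Sum>v\<in>octV n. F (fst v) (fst (snd v))) \<le> (\<Sum>v\<in>h ` D. F (fst v) (fst (snd v)))"
    using assms by (intro sum_mono2) (auto simp: D_def)
  also have "\<dots> \<le> (\<Sum>t\<in>D. F (fst (h t)) (fst (snd (h t))))"
    using sum_image_le[of D "\<lambda>v. F (fst v) (fst (snd v))" h] assms by (simp add: D_def comp_def)
  also have "\<dots> = (\<Sum>s\<in>{-1, 1::int}. \<Sum>x = - int n..int n. \<Sum>y = - int n..int n. F x y)"
    by (simp add: D_def h_def hemi_lift_def sum.cartesian_product')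
  also have "\<dots> = 2 * (\<Sum>x = - int n..int n. \<Sum>y = - int n..int n. F x y)"
    by simp
  finally show ?thesis .
qed

text \<open>A majorant of \<open>1 / (d\<^sub>1 d\<^sub>2)\<close> over all \<open>d\<^sub>1, d\<^sub>2 \<ge> 2\<close> with \<open>\<bar>k\<bar> \<le> d\<^sub>1\<close> and
  \<open>\<bar>k\<bar> \<le> d\<^sub>2 + 1\<close>, whose total mass over \<open>k \<in> \<int>\<close> is \<open>9/4\<close>.\<close>
definition offset_weight :: "int \<Rightarrow> real" where
  "offset_weight k = (if \<bar>k\<bar> \<le> 2 then 1/4 else 1 / (real_of_int \<bar>k\<bar> * (real_of_int \<bar>k\<bar> - 1)))"

lemma offset_weight_nonneg: "0 \<le> offset_weight k"
  by (auto simp: offset_weight_def)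

lemma sum_offset_weight_centered:
  "2 \<le> M \<Longrightarrow> (\<Sum>k = - int M..int M. offset_weight k) = 9/4 - 2 / real M"
proof (induction M rule: nat_induct_at_least)
  case base
  have "{- int 2..int 2} = {-2, -1, 0, 1, 2}" by auto
  then show ?case by (simp add: offset_weight_def)
next
  case (Suc M)
  have "{- int (Suc M)..int (Suc M)} = insert (- (int M + 1)) (insert (int M + 1) {- int M..int M})"
    by auto
  moreover have "offset_weight (- (int M + 1)) = 1 / ((real M + 1) * real M)"
    "offset_weight (int M + 1) = 1 / ((real M + 1) * real M)"
    using Suc.hyps by (simp_all add: offset_weight_def)
  ultimately have "(\<Sum>k = - int (Suc M)..int (Suc M). offset_weight k) =
      2 / ((real M + 1) * real M) + (9/4 - 2 / real M)"
    using Suc.IH by simp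
  also have "\<dots> = 9/4 - 2 / real (Suc M)"
  proof -
    have "2 / ((real M + 1) * real M) = 2 / real M - 2 / (real M + 1)"
      using Suc.hyps by (simp add: field_simps)
    then show ?thesis by simp
  qed
  finally show ?case .
qed

lemma sum_offset_weight_le: "(\<Sum>k = - int n..int n. offset_weight (k - c)) \<le> 9/4"
proof -
  define M where "M = nat (int n + \<bar>c\<bar>) + 2"
  have "(\<Sum>k = - int n..int n. offset_weight (k - c)) = sum offset_weight ((\<lambda>k. k - c) ` {- int n..int n})"
    by (subst sum.reindex) (auto simp: inj_on_def)
  also have "\<dots> \<le> (\<Sum>k = - int M..int M. offset_weight k)"
    by (rule sum_mono2) (auto simp: M_def offset_weight_nonneg)
  also have "\<dots> = 9/4 - 2 / real M"
    by (rule sum_offset_weight_centered) (simp add: M_def)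
  also have "\<dots> \<le> 9/4" by simp
  finally show ?thesis .
qed

lemma inverse_mult_le_offset_weight:
  fixes d\<^sub>1 d\<^sub>2 :: real and k :: int
  assumes "2 \<le> d\<^sub>1" "2 \<le> d\<^sub>2" "real_of_int \<bar>k\<bar> \<le> d\<^sub>1" "real_of_int \<bar>k\<bar> \<le> d\<^sub>2 + 1"
  shows "inverse (d\<^sub>1 * d\<^sub>2) \<le> offset_weight k"
proof (cases "\<bar>k\<bar> \<le> 2")
  case True
  have "2 * 2 \<le> d\<^sub>1 * d\<^sub>2" using assms by (intro mult_mono) auto
  with True show ?thesis by (simp add: offset_weight_def inverse_eq_divide)
next
  case False
  then have "3 \<le> real_of_int \<bar>k\<bar>" by simp
  with assms have "real_of_int \<bar>k\<bar> * (real_of_int \<bar>k\<bar> - 1) \<le> d\<^sub>1 * d\<^sub>2"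
    by (intro mult_mono) auto
  with \<open>3 \<le> real_of_int \<bar>k\<bar>\<close> False show ?thesis
    by (simp add: offset_weight_def inverse_eq_divide frac_le)
qed

lemma sum_octV_offset_weight_le:
  "(\<Sum>v\<in>octV n. offset_weight (fst v - a\<^sub>1) * offset_weight (fst (snd v) - a\<^sub>2)) \<le> 81/8"
proof -
  have "(\<Sum>v\<in>octV n. offset_weight (fst v - a\<^sub>1) * offset_weight (fst (snd v) - a\<^sub>2))
      \<le> 2 * ((\<Sum>x = - int n..int n. offset_weight (x - a\<^sub>1)) * (\<Sum>y = - int n..int n. offset_weight (y - a\<^sub>2)))"
    using sum_octV_le_projection[of "\<lambda>x y. offset_weight (x - a\<^sub>1) * offset_weight (y - a\<^sub>2)" n]
    by (simp add: offset_weight_nonneg sum_product)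
  also have "\<dots> \<le> 2 * (9/4 * (9/4))"
    using sum_offset_weight_le
    by (intro mult_left_mono mult_mono sum_nonneg offset_weight_nonneg) auto
  finally show ?thesis by simp
qed

section \<open>The union bound\<close>

definition E3_pairs :: "nat \<Rightarrow> vtx \<Rightarrow> (vtx \<times> vtx) set" where
  "E3_pairs n u = {(a, b). octAdj n u a \<and> b \<in> octV n \<and> a \<noteq> b \<and> b \<noteq> u \<and>
     2 \<le> octDist n a b \<and> 2 \<le> octDist n b u}"

lemma E3_subset_Union_E3_pairs:
  "E3 n u \<subseteq> (\<Union>p\<in>E3_pairs n u. {c. c (fst p) = snd p \<and> c (snd p) = u})"
proof
  fix c assume "c \<in> E3 n u"
  then obtain a b where "octAdj n u a" "b \<in> octV n" "a \<noteq> b" "u \<noteq> b"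
    and "2 \<le> octDist n a b" "2 \<le> octDist n b u" "c a = b" "c b = u"
    unfolding E3_def type_s_def type_w_def by blast
  then show "c \<in> (\<Union>p\<in>E3_pairs n u. {c. c (fst p) = snd p \<and> c (snd p) = u})"
    by (intro UN_I[of "(a, b)"]) (auto simp: E3_pairs_def)
qed

lemma E3_pairs_subset: "E3_pairs n u \<subseteq> {a. octAdj n u a} \<times> octV n"
  by (auto simp: E3_pairs_def)

lemma card_octAdj_le: "card {a. octAdj n u a} \<le> 27"
proof -
  obtain u\<^sub>1 u\<^sub>2 u\<^sub>3 where u: "u = (u\<^sub>1, u\<^sub>2, u\<^sub>3)" by (cases u)
  have "{a. octAdj n u a} \<subseteq> {u\<^sub>1 - 1..u\<^sub>1 + 1} \<times> {u\<^sub>2 - 1..u\<^sub>2 + 1} \<times> {u\<^sub>3 - 1..u\<^sub>3 + 1}"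
    by (auto simp: u octAdj_def abs_le_iff)
  then have "card {a. octAdj n u a} \<le> card ({u\<^sub>1 - 1..u\<^sub>1 + 1} \<times> {u\<^sub>2 - 1..u\<^sub>2 + 1} \<times> {u\<^sub>3 - 1..u\<^sub>3 + 1})"
    by (intro card_mono) auto
  also have "\<dots> = 27" by (simp add: card_cartesian_product)
  finally show ?thesis .
qed

text \<open>Since \<open>u\<close> is adjacent to \<open>a\<close>, each coordinate offset of \<open>b - a\<close> is bounded by
  \<open>d\<^sub>b\<^sub>u + 1\<close> as well as by \<open>d\<^sub>a\<^sub>b\<close>.\<close>
lemma inverse_sq_octDist_le_offset_weight:
  assumes "octAdj n u a" "b \<in> octV n" "u \<in> octV n" "2 \<le> octDist n a b" "2 \<le> octDist n b u"
  defines "d\<^sub>1 \<equiv> real (octDist n a b)" and "d\<^sub>2 \<equiv> real (octDist n b u)"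
  shows "inverse (d\<^sub>1\<^sup>2) * inverse (d\<^sub>2\<^sup>2) \<le>
    offset_weight (fst b - fst a) * offset_weight (fst (snd b) - fst (snd a))"
proof -
  have a: "a \<in> octV n" using assms(1) by (simp add: octAdj_def)
  have d: "2 \<le> d\<^sub>1" "2 \<le> d\<^sub>2" using assms(4,5) by (simp_all add: d\<^sub>1_def d\<^sub>2_def)
  have x: "\<bar>fst b - fst a\<bar> \<le> d\<^sub>1" "\<bar>fst b - fst a\<bar> \<le> d\<^sub>2 + 1"
    and y: "\<bar>fst (snd b) - fst (snd a)\<bar> \<le> d\<^sub>1" "\<bar>fst (snd b) - fst (snd a)\<bar> \<le> d\<^sub>2 + 1"
    using octDist_ge_coord[OF a assms(2)] octDist_ge_coord[OF assms(2,3)] assms(1)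
    by (auto simp: d\<^sub>1_def d\<^sub>2_def abs_minus_commute octAdj_def)
  have "inverse (d\<^sub>1 * d\<^sub>2) * inverse (d\<^sub>1 * d\<^sub>2) \<le>
      offset_weight (fst b - fst a) * offset_weight (fst (snd b) - fst (snd a))"
  proof (rule mult_mono)
    show "inverse (d\<^sub>1 * d\<^sub>2) \<le> offset_weight (fst b - fst a)"
      using d x by (rule inverse_mult_le_offset_weight)
    show "inverse (d\<^sub>1 * d\<^sub>2) \<le> offset_weight (fst (snd b) - fst (snd a))"
      using d y by (rule inverse_mult_le_offset_weight)
    show "0 \<le> inverse (d\<^sub>1 * d\<^sub>2)" using d by simp
  qed (rule offset_weight_nonneg)
  then show ?thesis by (simp add: power2_eq_square mult_ac)
qed

lemma prob_E3_pair_le: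
  assumes u: "u \<in> octV n" and ab: "(a, b) \<in> E3_pairs n u"
    and M: "0 < M" "\<And>v. v \<in> octV n \<Longrightarrow> M \<le> inv_sq_dist_sum n v"
  shows "measure_pmf.prob (osw_pmf n) {c. c a = b \<and> c b = u} \<le>
    offset_weight (fst b - fst a) * offset_weight (fst (snd b) - fst (snd a)) / M\<^sup>2"
proof -
  define d\<^sub>1 d\<^sub>2 where "d\<^sub>1 = real (octDist n a b)" and "d\<^sub>2 = real (octDist n b u)"
  have a: "a \<in> octV n" "octAdj n u a" and b: "b \<in> octV n" "a \<noteq> b" "b \<noteq> u"
    and d: "2 \<le> octDist n a b" "2 \<le> octDist n b u"
    using ab by (auto simp: E3_pairs_def octAdj_def)
  have Z: "0 \<le> octZ n v" "octZ n v \<le> inverse M" "0 < inv_sq_dist_sum n v" if "v \<in> octV n" for v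
    using M(2)[OF that] \<open>0 < M\<close> by (auto simp: octZ_eq le_imp_inverse_le)
  have "measure_pmf.prob (osw_pmf n) {c. c a = b \<and> c b = u} =
      pmf (choice_pmf n a) b * pmf (choice_pmf n b) u"
    unfolding osw_pmf_def using a b by (intro measure_Pi_pmf_two_components finite_octV)
  also have "\<dots> = (octZ n a * octZ n b) * (inverse (d\<^sub>1\<^sup>2) * inverse (d\<^sub>2\<^sup>2))"
    using a b u pmf_choice_pmf[OF Z(3)[OF a(1)], of b] pmf_choice_pmf[OF Z(3)[OF b(1)], of u]
    by (simp add: d\<^sub>1_def d\<^sub>2_def)
  also have "\<dots> \<le> (inverse M * inverse M) *
      (offset_weight (fst b - fst a) * offset_weight (fst (snd b) - fst (snd a)))"
  proof (rule mult_mono)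
    show "octZ n a * octZ n b \<le> inverse M * inverse M"
      using Z[OF a(1)] Z[OF b(1)] \<open>0 < M\<close> by (intro mult_mono) auto
    show "inverse (d\<^sub>1\<^sup>2) * inverse (d\<^sub>2\<^sup>2) \<le>
        offset_weight (fst b - fst a) * offset_weight (fst (snd b) - fst (snd a))"
      using inverse_sq_octDist_le_offset_weight[OF a(2) b(1) u d] by (simp add: d\<^sub>1_def d\<^sub>2_def)
  qed simp_all
  also have "\<dots> = offset_weight (fst b - fst a) * offset_weight (fst (snd b) - fst (snd a)) / M\<^sup>2"
    by (simp add: power2_eq_square divide_inverse)
  finally show ?thesis .
qed

lemma prob_E3_le:
  assumes u: "u \<in> octV n"
    and M: "0 < M" "\<And>v. v \<in> octV n \<Longrightarrow> M \<le> inv_sq_dist_sum n v"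
  shows "measure_pmf.prob (osw_pmf n) (E3 n u) \<le> 27 * (81/8) / M\<^sup>2"
proof -
  define w where "w p = offset_weight (fst (snd p) - fst (fst p)) *
    offset_weight (fst (snd (snd p)) - fst (snd (fst p))) / M\<^sup>2" for p :: "vtx \<times> vtx"
  define N where "N = {a. octAdj n u a}"
  have fin: "finite (N \<times> octV n)"
    using finite_octV by (auto simp: N_def octAdj_def intro: finite_subset)
  have "measure_pmf.prob (osw_pmf n) (E3 n u) \<le>
      measure_pmf.prob (osw_pmf n) (\<Union>p\<in>E3_pairs n u. {c. c (fst p) = snd p \<and> c (snd p) = u})"
    using E3_subset_Union_E3_pairs by (intro measure_pmf.finite_measure_mono) auto
  also have "\<dots> \<le> (\<Sum>p\<in>E3_pairs n u. measure_pmf.prob (osw_pmf n) {c. c (fst p) = snd p \<and> c (snd p) = u})"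
    by (rule measure_pmf.finite_measure_subadditive_finite)
       (use finite_subset[OF E3_pairs_subset fin[unfolded N_def]] in auto)
  also have "\<dots> \<le> (\<Sum>p\<in>E3_pairs n u. w p)"
  proof (rule sum_mono)
    fix p assume "p \<in> E3_pairs n u"
    then show "measure_pmf.prob (osw_pmf n) {c. c (fst p) = snd p \<and> c (snd p) = u} \<le> w p"
      using prob_E3_pair_le[OF u _ M, of "fst p" "snd p"] by (simp add: w_def)
  qed
  also have "\<dots> \<le> (\<Sum>p\<in>N \<times> octV n. w p)"
    using E3_pairs_subset fin by (intro sum_mono2) (auto simp: N_def w_def offset_weight_nonneg)
  also have "\<dots> = (\<Sum>a\<in>N. \<Sum>b\<in>octV n.
      offset_weight (fst b - fst a) * offset_weight (fst (snd b) - fst (snd a))) / M\<^sup>2"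
    by (simp add: w_def sum.cartesian_product' sum_divide_distrib)
  also have "\<dots> \<le> (\<Sum>a\<in>N. 81/8) / M\<^sup>2"
    by (intro divide_right_mono sum_mono sum_octV_offset_weight_le) auto
  also have "\<dots> \<le> 27 * (81/8) / M\<^sup>2"
    using card_octAdj_le[of n u] by (intro divide_right_mono) (auto simp: N_def)
  finally show ?thesis .
qed

lemma zeta3_ge_1: "1 \<le> zeta3"
proof -
  have "summable (\<lambda>i. 1 / (real (Suc i))^3)"
    using inverse_power_summable[of 3, where 'a = real] summable_Suc_iff[of "\<lambda>i. inverse (real i ^ 3)"]
    by (simp add: inverse_eq_divide)
  from sum_le_suminf[OF this, of "{0}"] show ?thesis
    by (simp add: zeta3_def)
qed

lemma ln_3_le: "ln (3::real) \<le> 3/2"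
proof -
  have "ln (2 * (3/2) :: real) = ln 2 + ln (3/2)" by (subst ln_mult) simp_all
  then have "ln (3::real) = ln 2 + ln (3/2)" by simp
  with ln_le_minus_one[of 2] ln_le_minus_one[of "3/2"] show ?thesis by simp
qed

lemma prob_E3_lt:
  assumes u: "u \<in> octV n" and L: "6 \<le> ln (real n + 1)"
  shows "measure_pmf.prob (osw_pmf n) (E3 n u) < 36 / (ln (real n + 1))\<^sup>2"
proof -
  define L where "L = ln (real n + 1)"
  define M where "M = 4 * (L - ln 3)"
  have "6 \<le> L" using L by (simp add: L_def)
  then have "3 * L \<le> M" using ln_3_le by (simp add: M_def algebra_simps)
  with \<open>6 \<le> L\<close> have "0 < M" by linarith
  have M_le: "M \<le> inv_sq_dist_sum n v" if "v \<in> octV n" for v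
    using ln_le_inv_sq_dist_sum[OF that] by (simp add: M_def L_def)
  have "measure_pmf.prob (osw_pmf n) (E3 n u) \<le> 27 * (81/8) / M\<^sup>2"
    by (rule prob_E3_le[OF u \<open>0 < M\<close> M_le])
  also have "\<dots> \<le> 27 * (81/8) / (3 * L)\<^sup>2"
  proof (rule divide_left_mono)
    show "(3 * L)\<^sup>2 \<le> M\<^sup>2"
      using \<open>3 * L \<le> M\<close> \<open>6 \<le> L\<close> by (intro power_mono) simp_all
    show "0 < M\<^sup>2 * (3 * L)\<^sup>2"
      using \<open>0 < M\<close> \<open>6 \<le> L\<close> by simp
  qed simp
  also have "\<dots> = (243/8) / L\<^sup>2"
    by (simp add: power_mult_distrib)
  also have "\<dots> < 36 / L\<^sup>2"
    using \<open>6 \<le> L\<close> by (intro divide_strict_right_mono) simp_all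
  finally show ?thesis by (simp only: L_def)
qed

theorem lemma7:
  fixes n :: nat and u :: vtx
  assumes "n \<ge> 1" and "u \<in> octV n"
  shows "measure_pmf.prob (osw_pmf n) (E3 n u) < 36 * zeta3 / (ln (real n + 1))\<^sup>2"
proof -
  define L where "L = ln (real n + 1)"
  have "0 < L" using assms(1) by (simp add: L_def)
  show ?thesis
  proof (cases "L\<^sup>2 < 36 * zeta3")
    case True
    with \<open>0 < L\<close> have "1 < 36 * zeta3 / L\<^sup>2" by simp
    with measure_pmf.prob_le_1 show ?thesis unfolding L_def by (rule le_less_trans)
  next
    case False
    with zeta3_ge_1 have "36 \<le> L\<^sup>2" by linarith
    with \<open>0 < L\<close> have "6 \<le> L" using power2_le_imp_le[of 6 L] by simp
    with prob_E3_lt[OF assms(2)] have "measure_pmf.prob (osw_pmf n) (E3 n u) < 36 / L\<^sup>2"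
      by (simp add: L_def)
    also have "\<dots> \<le> 36 * zeta3 / L\<^sup>2"
      using zeta3_ge_1 by (intro divide_right_mono) simp_all
    finally show ?thesis by (simp only: L_def)
  qed
qed

end
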